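(* Let $\mathcal{C}$ be a finite or countable alphabet with letter probabilities $(p_\alpha)_{\alpha\in\mathcal{C}}$, $0<p_\alpha<1$, $\sum_\alpha p_\alpha=1$, and let $\mathbb{P}$ be the product measure on $\mathcal{C}^{\mathbb{N}}$ with these identically distributed marginals. View each $S_n$ as a random variable on $\mathcal{C}^{\mathbb{N}}$ via $S_n(x)=S_n(x_1^n)$. Then there is no random variable $S$ on $\mathcal{C}^{\mathbb{N}}$ such that $S_n$ converges in probability to $S$.
   Context: $x_a^b=(x_a,\dots,x_b)$. The first return is $T_n(x_1^n)=\min\{j\ge1: x_1^{n-j}=x_{j+1}^n\}$ ($T_n=n$ if the set is empty), and $S_n=n-T_n$. *)

theory Defs
  imports "HOL-Probability.Probability"
begin

text \<open>Sequences x_1, x_2, ... are represented 0-based: x_k is x (k - 1).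
  First return T_n(x_1^n) = min {j >= 1. x_1^{n-j} = x_{j+1}^n}, and T_n = n if the
  set of j in 1..n-1 with this property is empty (j >= n always qualifies vacuously,
  so this agrees with the paper's convention).\<close>

definition first_return :: "nat \<Rightarrow> (nat \<Rightarrow> 'a) \<Rightarrow> nat" where
  "first_return n x =
     (let J = {j. 1 \<le> j \<and> j < n \<and> (\<forall>i<n - j. x i = x (i + j))}
      in if J = {} then n else Min J)"

definition S_stat :: "nat \<Rightarrow> (nat \<Rightarrow> 'a) \<Rightarrow> nat" where
  "S_stat n x = n - first_return n x"

definition conv_in_prob :: "'b measure \<Rightarrow> (nat \<Rightarrow> 'b \<Rightarrow> real) \<Rightarrow> ('b \<Rightarrow> real) \<Rightarrow> bool" where
  "conv_in_prob M X Y \<longleftrightarrow>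
     (\<forall>e>0. (\<lambda>n. measure M {x \<in> space M. e < \<bar>X n x - Y x\<bar>}) \<longlonglongrightarrow> 0)"

end

theory Submission
  imports Defs
begin

text \<open>If x_1 = x_n \<noteq> x_(n+1), then n - 1 is a period of x_1^n, so T_n \<le> n - 1. If moreover
  S_n = S_(n+1), then T_(n+1) = T_n + 1, and the periods T_n of x_1^n and T_n + 1 of x_1^(n+1) equate
  the letter x_(n-T_n) with both x_n and x_(n+1), which is absurd. Hence S_n \<noteq> S_(n+1) on a cylinder
  event of probability p_a^2 p_b, independent of n, whereas convergence in probability would force
  P(|S_(n+1) - S_n| > 1/2) \<rightarrow> 0.\<close>

definition periods :: "nat \<Rightarrow> (nat \<Rightarrow> 'a) \<Rightarrow> nat set" where
  "periods n x = {j. 1 \<le> j \<and> j < n \<and> (\<forall>i<n - j. x i = x (i + j))}"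

lemma finite_periods: "finite (periods n x)"
  by (simp add: periods_def)

lemma first_return_periods:
  "first_return n x = (if periods n x = {} then n else Min (periods n x))"
  by (simp only: first_return_def periods_def Let_def)

lemma periods_less: "j \<in> periods n x \<Longrightarrow> j < n"
  by (simp add: periods_def)

lemma first_return_le: "first_return n x \<le> n"
  using Min_in[OF finite_periods, of n x] periods_less[of _ n x]
  by (auto simp: first_return_periods less_imp_le)

lemma first_return_period:
  assumes "i + first_return n x < n"
  shows "x i = x (i + first_return n x)"
proof -
  have "periods n x \<noteq> {}"
    using assms by (auto simp: first_return_periods)
  then have "first_return n x \<in> periods n x"
    using Min_in[OF finite_periods] by (simp add: first_return_periods)
  then show ?thesis
    using assms by (auto simp: periods_def)
qed

lemma first_return_le_period:
  assumes "1 \<le> j" "j < n" "\<And>i. i + j < n \<Longrightarrow> x i = x (i + j)"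
  shows "first_return n x \<le> j"
proof -
  have "j \<in> periods n x"
    using assms by (auto simp: periods_def)
  then show ?thesis
    using Min_le[OF finite_periods] by (auto simp: first_return_periods)
qed

lemma first_return_cong:
  assumes "\<And>i. i < n \<Longrightarrow> x i = y i"
  shows "first_return n x = first_return n y"
proof -
  have "periods n x = periods n y"
    using assms by (auto simp: periods_def less_diff_conv)
  then show ?thesis
    by (simp add: first_return_periods)
qed

lemma S_stat_Suc_neq:
  assumes "2 \<le> n" and "x 0 = x (n - 1)" and "x (n - 1) \<noteq> x n"
  shows "S_stat (Suc n) x \<noteq> S_stat n x"
proof
  assume eq: "S_stat (Suc n) x = S_stat n x"
  define j where "j = first_return n x"
  have "j \<le> n - 1"
    unfolding j_def
  proof (rule first_return_le_period)
    show "x i = x (i + (n - 1))" if "i + (n - 1) < n" for i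
      using that assms(1,2) by (cases i) auto
  qed (use assms(1) in auto)
  moreover have "first_return (Suc n) x \<le> Suc n"
    by (rule first_return_le)
  ultimately have j': "first_return (Suc n) x = Suc j"
    using eq assms(1) by (simp add: S_stat_def j_def)
  have "x (n - 1 - j) = x (n - 1)"
    using first_return_period[of "n - 1 - j" n x] \<open>j \<le> n - 1\<close> assms(1)
    by (simp add: j_def[symmetric])
  moreover have "x (n - 1 - j) = x n"
    using first_return_period[of "n - 1 - j" "Suc n" x] \<open>j \<le> n - 1\<close> assms(1)
    by (simp add: j')
  ultimately show False
    using assms(3) by simp
qed

lemma measurable_prefix:
  fixes P :: "'a::countable pmf"
  shows "(\<lambda>x. map x [0..<n]) \<in> PiM UNIV (\<lambda>_::nat. measure_pmf P) \<rightarrow>\<^sub>M count_space UNIV"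
  by (induct n) auto

lemma measurable_S_stat:
  fixes P :: "'a::countable pmf"
  shows "S_stat n \<in> PiM UNIV (\<lambda>_::nat. measure_pmf P) \<rightarrow>\<^sub>M count_space UNIV"
proof -
  have "S_stat n x = S_stat n (\<lambda>i. map x [0..<n] ! i)" for x
    unfolding S_stat_def by (subst first_return_cong[of n x "\<lambda>i. map x [0..<n] ! i"]) simp_all
  then have "S_stat n = (\<lambda>x. S_stat n (\<lambda>i. map x [0..<n] ! i))" ..
  also have "\<dots> \<in> PiM UNIV (\<lambda>_::nat. measure_pmf P) \<rightarrow>\<^sub>M count_space UNIV"
    by (rule measurable_compose[OF measurable_prefix]) simp
  finally show ?thesis .
qed

lemma borel_measurable_S_stat:
  fixes P :: "'a::countable pmf"
  shows "(\<lambda>x. real (S_stat n x)) \<in> borel_measurable (PiM UNIV (\<lambda>_::nat. measure_pmf P))"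
  by (rule measurable_compose[OF measurable_S_stat borel_measurable_count_space])

lemma measure_PiM_pmf_cylinder:
  fixes P :: "'a pmf" and f :: "'i \<Rightarrow> 'a"
  assumes "finite J"
  shows "measure (PiM UNIV (\<lambda>_. measure_pmf P)) {x. \<forall>i\<in>J. x i = f i} = (\<Prod>i\<in>J. pmf P (f i))"
proof -
  interpret product_prob_space "\<lambda>_::'i. measure_pmf P" UNIV
    by (simp add: product_prob_space_def product_prob_space_axioms_def product_sigma_finite_def
        measure_pmf.prob_space_axioms measure_pmf.sigma_finite_measure_axioms)
  have "{x. \<forall>i\<in>J. x i = f i} = prod_emb UNIV (\<lambda>_. measure_pmf P) J (\<Pi>\<^sub>E i\<in>J. {f i})"
    by (auto simp: prod_emb_def PiE_iff)
  also have "measure (PiM UNIV (\<lambda>_. measure_pmf P)) \<dots> = (\<Prod>i\<in>J. measure (measure_pmf P) {f i})"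
    by (rule measure_PiM_emb) (use assms in auto)
  finally show ?thesis
    by (simp add: measure_pmf_single)
qed

lemma exists_other_of_pmf_less_1:
  fixes P :: "'a pmf"
  assumes "pmf P a < 1"
  obtains b where "b \<noteq> a"
proof -
  have "P \<noteq> return_pmf a"
    using assms by auto
  then have "\<not> set_pmf P \<subseteq> {a}"
    by (simp add: set_pmf_subset_singleton)
  then show ?thesis
    using that by blast
qed

lemma conv_in_prob_Suc_diff:
  assumes "prob_space M" and "conv_in_prob M X Y"
    and "\<And>n. X n \<in> borel_measurable M" and "Y \<in> borel_measurable M" and "0 < e"
  shows "(\<lambda>n. measure M {x \<in> space M. e < \<bar>X (Suc n) x - X n x\<bar>}) \<longlonglongrightarrow> 0"
proof -
  interpret prob_space M by fact
  define A where "A n = {x \<in> space M. e / 2 < \<bar>X n x - Y x\<bar>}" for n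
  have A_sets: "A n \<in> sets M" for n
    unfolding A_def using assms(3,4) by measurable
  have A_lim: "(\<lambda>n. measure M (A n)) \<longlonglongrightarrow> 0"
    using spec[OF assms(2)[unfolded conv_in_prob_def], of "e / 2"] half_gt_zero[OF assms(5)]
    unfolding A_def by (rule mp)
  have sum_lim: "(\<lambda>n. measure M (A (Suc n)) + measure M (A n)) \<longlonglongrightarrow> 0"
    using LIMSEQ_Suc[OF A_lim] A_lim by (rule tendsto_add_zero)
  have bound: "measure M {x \<in> space M. e < \<bar>X (Suc n) x - X n x\<bar>}
      \<le> measure M (A (Suc n)) + measure M (A n)" for n
  proof -
    have "{x \<in> space M. e < \<bar>X (Suc n) x - X n x\<bar>} \<subseteq> A (Suc n) \<union> A n"
    proof
      fix x assume x: "x \<in> {x \<in> space M. e < \<bar>X (Suc n) x - X n x\<bar>}"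
      then have "e < \<bar>X (Suc n) x - X n x\<bar>"
        by simp
      then have "e / 2 < \<bar>X (Suc n) x - Y x\<bar> \<or> e / 2 < \<bar>X n x - Y x\<bar>"
        by linarith
      with x show "x \<in> A (Suc n) \<union> A n"
        by (auto simp: A_def)
    qed
    then have "measure M {x \<in> space M. e < \<bar>X (Suc n) x - X n x\<bar>} \<le> measure M (A (Suc n) \<union> A n)"
      using A_sets by (intro finite_measure_mono) auto
    also have "\<dots> \<le> measure M (A (Suc n)) + measure M (A n)"
      using A_sets by (intro measure_Un_le) auto
    finally show ?thesis .
  qed
  show ?thesis
    by (rule tendsto_sandwich[OF always_eventually always_eventually tendsto_const sum_lim])
       (simp_all add: bound)
qed

lemma S_stat_jump_prob_ge:
  fixes P :: "'a::countable pmf"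
  assumes "2 \<le> n" and "b \<noteq> a"
  defines "M \<equiv> PiM UNIV (\<lambda>_::nat. measure_pmf P)"
  shows "pmf P a * pmf P a * pmf P b
    \<le> measure M {x \<in> space M. 1/2 < \<bar>real (S_stat (Suc n) x) - real (S_stat n x)\<bar>}"
proof -
  interpret prob_space M
    unfolding M_def by (rule prob_space_PiM) (simp add: measure_pmf.prob_space_axioms)
  define f where "f i = (if i = n then b else a)" for i
  let ?F = "{x. \<forall>i\<in>{0, n - 1, n}. x i = f i}"
  have "0 \<noteq> n - 1" "n - 1 \<noteq> n" "0 \<noteq> n"
    using assms(1) by auto
  then have "pmf P a * pmf P a * pmf P b = (\<Prod>i\<in>{0, n - 1, n}. pmf P (f i))"
    by (simp add: f_def)
  also have "\<dots> = measure M ?F"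
    unfolding M_def by (rule measure_PiM_pmf_cylinder[symmetric]) simp
  also have "\<dots> \<le> measure M {x \<in> space M. 1/2 < \<bar>real (S_stat (Suc n) x) - real (S_stat n x)\<bar>}"
  proof (rule finite_measure_mono)
    show "?F \<subseteq> {x \<in> space M. 1/2 < \<bar>real (S_stat (Suc n) x) - real (S_stat n x)\<bar>}"
    proof safe
      fix x assume "\<forall>i\<in>{0, n - 1, n}. x i = f i"
      then have "S_stat (Suc n) x \<noteq> S_stat n x"
        using assms(1,2) by (intro S_stat_Suc_neq) (auto simp: f_def)
      then show "1/2 < \<bar>real (S_stat (Suc n) x) - real (S_stat n x)\<bar>"
        by linarith
    qed (simp add: M_def space_PiM)
    show "{x \<in> space M. 1/2 < \<bar>real (S_stat (Suc n) x) - real (S_stat n x)\<bar>} \<in> sets M"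
      using borel_measurable_S_stat[of n P] borel_measurable_S_stat[of "Suc n" P]
      unfolding M_def by measurable
  qed
  finally show ?thesis .
qed

theorem proposition3:
  fixes P :: "'a::countable pmf"
  assumes "\<And>a. 0 < pmf P a" and "\<And>a. pmf P a < 1"
  shows "\<not> (\<exists>S \<in> borel_measurable (PiM UNIV (\<lambda>_::nat. measure_pmf P)).
              conv_in_prob (PiM UNIV (\<lambda>_::nat. measure_pmf P))
                (\<lambda>n x. real (S_stat n x)) S)"
proof
  let ?M = "PiM UNIV (\<lambda>_::nat. measure_pmf P)"
  assume "\<exists>S \<in> borel_measurable ?M. conv_in_prob ?M (\<lambda>n x. real (S_stat n x)) S"
  then obtain S where S: "S \<in> borel_measurable ?M" and conv: "conv_in_prob ?M (\<lambda>n x. real (S_stat n x)) S"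
    by blast
  have "prob_space ?M"
    by (rule prob_space_PiM) (simp add: measure_pmf.prob_space_axioms)
  then have jumps_vanish: "(\<lambda>n. measure ?M {x \<in> space ?M.
      1/2 < \<bar>real (S_stat (Suc n) x) - real (S_stat n x)\<bar>}) \<longlonglongrightarrow> 0"
    using conv_in_prob_Suc_diff[OF _ conv borel_measurable_S_stat S, of "1/2"] by simp
  fix a :: 'a
  obtain b where "b \<noteq> a"
    using exists_other_of_pmf_less_1[OF assms(2)] by blast
  then have "pmf P a * pmf P a * pmf P b \<le> 0"
    using S_stat_jump_prob_ge[of _ b a P]
    by (intro tendsto_lowerbound[OF jumps_vanish]) (auto intro: eventually_sequentiallyI[of 2])
  moreover have "0 < pmf P a * pmf P a * pmf P b"
    using assms(1) by simp
  ultimately show False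
    by simp
qed

end
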